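(* For every integer $n\geq 0$, \[ \overline{p}(5n)\equiv (-1)^{n}\,\overline{p}(20n) \pmod{5}. \]
   Context: An overpartition of a nonnegative integer $n$ is a partition of $n$ (a nonincreasing sequence of positive integers summing to $n$) in which the first occurrence of each distinct part may be overlined. $\overline{p}(n)$ denotes the number of overpartitions of $n$, with $\overline{p}(0)=1$ and $\overline{p}(n)=0$ for $n<0$. Equivalently, $\sum_{n\ge0}\overline{p}(n)q^n=\prod_{k\ge1}\frac{1+q^k}{1-q^k}$. *)

theory Defs
  imports Main "HOL-Library.Multiset" "HOL-Number_Theory.Cong"
begin

text \<open>An overpartition of n is a partition together with a choice of which distinct
parts have their first occurrence overlined, i.e. a subset of the set of parts.\<close>

definition overpartitions :: "nat \<Rightarrow> (nat multiset \<times> nat set) set" where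
  "overpartitions n = {(M, S). (\<forall>k\<in>#M. k > 0) \<and> sum_mset M = n \<and> S \<subseteq> set_mset M}"

definition overpartition_count :: "nat \<Rightarrow> nat" where
  "overpartition_count n = card (overpartitions n)"

end

theory Submission
  imports Defs "HOL-Computational_Algebra.Formal_Power_Series" "HOL-Library.Numeral_Type"
begin

(*
  Let phi(q) = sum_{k in Z} q^(k^2) and P(q) = sum_n pbar(n) q^n.  Gauss's identity
  phi(-q) P(q) = 1 is proved by comparing truncations of finite products, the key input
  being a finite form of the Jacobi triple product obtained from Cauchy's q-binomial
  theorem.  Over Z/5Z the Frobenius map gives phi(-q)^5 = phi(-q^5), so that
  P(q) phi(-q^5) = phi(-q)^4.  The identity r2(5m) + #{(a,b) : 5 | a, 5 | b, a^2+b^2 = 5m}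
  = 2 r2(m) for sums of two squares, together with the 5-dissection of phi, shows that
  the terms of phi^4 in degrees divisible by 5 are phi(q^5)^4 modulo 5.  Extracting those
  degrees gives sum_n pbar(5n) q^n = phi(-q)^3 over Z/5Z, i.e. pbar(5n) = (-1)^n r3(n)
  (mod 5), and r3(4n) = r3(n) finishes the proof.
*)

text \<open>Identities between infinite products are proved by comparing finite products
  coefficientwise below a degree bound; \<open>agree m A B\<close> says that \<open>A\<close> and \<open>B\<close> have
  the same coefficients in all degrees below \<open>m\<close>.\<close>

definition agree :: "nat \<Rightarrow> 'a::comm_ring_1 fps \<Rightarrow> 'a fps \<Rightarrow> bool" where
  "agree m A B \<longleftrightarrow> (\<forall>i<m. fps_nth A i = fps_nth B i)"

lemma agree_refl [simp]: "agree m A A"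
  by (simp add: agree_def)

lemma agree_sym: "agree m A B \<Longrightarrow> agree m B A"
  by (simp add: agree_def)

lemma agree_trans: "agree m A B \<Longrightarrow> agree m B C \<Longrightarrow> agree m A C"
  by (simp add: agree_def)

lemma agree_mono: "agree m A B \<Longrightarrow> k \<le> m \<Longrightarrow> agree k A B"
  by (simp add: agree_def)

lemma agree_add: "agree m A B \<Longrightarrow> agree m C D \<Longrightarrow> agree m (A + C) (B + D)"
  by (simp add: agree_def)

lemma agree_mult: "agree m A B \<Longrightarrow> agree m C D \<Longrightarrow> agree m (A * C) (B * D)"
  unfolding agree_def fps_mult_nth by (auto intro!: sum.cong)

lemma agree_power: "agree m A B \<Longrightarrow> agree m (A ^ k) (B ^ k)"
  by (induct k) (auto intro: agree_mult)

lemma agree_prod: "(\<And>i. i \<in> I \<Longrightarrow> agree m (f i) (g i)) \<Longrightarrow> agree m (prod f I) (prod g I)"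
  by (induct I rule: infinite_finite_induct) (auto intro: agree_mult)

lemma agree_sum: "(\<And>i. i \<in> I \<Longrightarrow> agree m (f i) (g i)) \<Longrightarrow> agree m (sum f I) (sum g I)"
  by (induct I rule: infinite_finite_induct) (auto intro: agree_add)

lemma agree_shift: "agree m A B \<Longrightarrow> agree (k + m) (fps_X ^ k * A) (fps_X ^ k * B)"
  by (auto simp: agree_def fps_X_power_mult_nth)

lemma agree_one_plus_X_power: "m \<le> k \<Longrightarrow> agree m (1 + c * fps_X ^ k) 1"
  by (auto simp: agree_def fps_X_power_mult_right_nth)

lemma agree_all: "(\<And>m. agree m A B) \<Longrightarrow> A = B"
  by (auto simp: agree_def fps_eq_iff)

text \<open>A factor with constant term \<open>1\<close> can be cancelled: the coefficients of \<open>A\<close> are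
  recovered one after another from those of \<open>A * U\<close>.\<close>

lemma agree_cancel:
  assumes AB: "agree m (A * U) (B * U)" and U0: "fps_nth U 0 = 1"
  shows "agree m A B"
  unfolding agree_def
proof (intro allI impI)
  fix n assume "n < m"
  then show "fps_nth A n = fps_nth B n"
  proof (induction n rule: less_induct)
    case (less n)
    have split: "fps_nth (C * U) n = fps_nth C n + (\<Sum>i<n. fps_nth C i * fps_nth U (n - i))"
      for C :: "'a fps"
      using U0 by (simp add: fps_mult_nth atLeast0AtMost sum.atMost_Suc lessThan_Suc_atMost[symmetric])
    have "(\<Sum>i<n. fps_nth A i * fps_nth U (n - i)) = (\<Sum>i<n. fps_nth B i * fps_nth U (n - i))"
      using less by (intro sum.cong) auto
    moreover have "fps_nth (A * U) n = fps_nth (B * U) n"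
      using AB less.prems by (simp add: agree_def)
    ultimately show ?case by (simp add: split)
  qed
qed

definition dilate :: "nat \<Rightarrow> 'a::comm_ring_1 fps \<Rightarrow> 'a fps" where
  "dilate k A = Abs_fps (\<lambda>n. if k dvd n then fps_nth A (n div k) else 0)"

definition decimate :: "nat \<Rightarrow> 'a::comm_ring_1 fps \<Rightarrow> 'a fps" where
  "decimate k A = Abs_fps (\<lambda>n. fps_nth A (k * n))"

definition residue_part :: "nat \<Rightarrow> nat \<Rightarrow> 'a::comm_ring_1 fps \<Rightarrow> 'a fps" where
  "residue_part k c A = Abs_fps (\<lambda>n. if n mod k = c then fps_nth A n else 0)"

definition supported :: "nat \<Rightarrow> nat \<Rightarrow> 'a::comm_ring_1 fps \<Rightarrow> bool" where
  "supported k c A \<longleftrightarrow> (\<forall>n. n mod k \<noteq> c \<longrightarrow> fps_nth A n = 0)"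

definition sign_twist :: "'a::comm_ring_1 fps \<Rightarrow> 'a fps" where
  "sign_twist A = Abs_fps (\<lambda>n. (-1) ^ n * fps_nth A n)"

lemma dilate_nth: "fps_nth (dilate k A) n = (if k dvd n then fps_nth A (n div k) else 0)"
  by (simp add: dilate_def)

lemma decimate_dilate: "0 < k \<Longrightarrow> decimate k (dilate k A) = A"
  by (simp add: fps_eq_iff decimate_def dilate_nth)

lemma dilate_inj: "0 < k \<Longrightarrow> dilate k A = dilate k B \<Longrightarrow> A = B"
  by (metis decimate_dilate)

lemma residue_part_zero: "0 < k \<Longrightarrow> residue_part k 0 A = dilate k (decimate k A)"
  by (auto simp: fps_eq_iff residue_part_def dilate_nth decimate_def elim!: dvdE)

text \<open>Dilation is a ring homomorphism; in the product only pairs of degrees that are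
  both multiples of \<open>k\<close> contribute.\<close>

lemma dilate_mult:
  assumes k: "0 < k"
  shows "dilate k (A * B) = dilate k A * dilate k B"
proof (rule fps_ext)
  fix n
  define t where "t i = fps_nth (dilate k A) i * fps_nth (dilate k B) (n - i)" for i
  have t_zero: "t i = 0" if "\<not> (k dvd i \<and> k dvd n)" "i \<le> n" for i
    using that by (auto simp: t_def dilate_nth dvd_diff_nat dest: dvd_add[of k i "n - i"])
  show "fps_nth (dilate k (A * B)) n = fps_nth (dilate k A * dilate k B) n"
  proof (cases "k dvd n")
    case True
    then obtain q where n: "n = k * q" by blast
    have off_multiples: "t i = 0" if "i \<le> n" "i \<notin> (\<lambda>j. k * j) ` {0..q}" for i
    proof -
      have "\<not> k dvd i"
      proof
        assume "k dvd i"
        then obtain j where "i = k * j" by blast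
        with that k show False by (auto simp: n)
      qed
      then show ?thesis using that by (simp add: t_zero)
    qed
    have "fps_nth (dilate k A * dilate k B) n = (\<Sum>i\<in>(\<lambda>j. k * j) ` {0..q}. t i)"
      unfolding fps_mult_nth t_def[symmetric]
      by (rule sum.mono_neutral_right) (auto simp: n off_multiples)
    also have "\<dots> = (\<Sum>j=0..q. fps_nth A j * fps_nth B (q - j))"
      using k by (subst sum.reindex) (auto simp: inj_on_def t_def dilate_nth n
          diff_mult_distrib2[symmetric] intro!: sum.cong)
    finally show ?thesis using k by (simp add: dilate_nth n fps_mult_nth)
  next
    case False
    have "fps_nth (dilate k A * dilate k B) n = (\<Sum>i=0..n. t i)"
      by (simp add: fps_mult_nth t_def)
    also have "\<dots> = 0"
      using False by (simp add: t_zero)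
    finally show ?thesis using False by (simp add: dilate_nth)
  qed
qed

lemma supported_mult:
  assumes "supported k a A" "supported k b B"
  shows "supported k ((a + b) mod k) (A * B)"
  unfolding supported_def
proof (intro allI impI)
  fix n assume n: "n mod k \<noteq> (a + b) mod k"
  have "fps_nth A i * fps_nth B (n - i) = 0" if "i \<le> n" for i
  proof (cases "i mod k = a \<and> (n - i) mod k = b")
    case True
    then have "(i + (n - i)) mod k = (a + b) mod k" by (metis mod_add_eq)
    then show ?thesis using n that by auto
  qed (use assms in \<open>auto simp: supported_def\<close>)
  then show "fps_nth (A * B) n = 0" by (simp add: fps_mult_nth)
qed

lemma supported_power: "supported k a A \<Longrightarrow> supported k ((a * j) mod k) (A ^ j)"
proof (induct j)
  case 0 then show ?case by (auto simp: supported_def)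
next
  case (Suc j)
  then have "supported k ((a + (a * j) mod k) mod k) (A * A ^ j)"
    by (intro supported_mult) auto
  then show ?case by (simp add: mod_add_right_eq add.commute)
qed

lemma supported_residue_part: "supported k (c mod k) (residue_part k c A)"
  by (auto simp: residue_part_def supported_def)

lemma supported_dilate: "supported k 0 (dilate k A)"
  by (auto simp: supported_def dilate_nth)

lemma residue_part_supported:
  "supported k c A \<Longrightarrow> c < k \<Longrightarrow> residue_part k d A = (if d = c then A else 0)"
  by (auto simp: residue_part_def supported_def fps_eq_iff)

lemma residue_part_add: "residue_part k c (A + B) = residue_part k c A + residue_part k c B"
  by (simp add: residue_part_def fps_eq_iff)

lemma residue_part_numeral_mult:
  "residue_part k c (numeral j * A) = numeral j * residue_part k c A"
  by (simp add: numeral_fps_const residue_part_def fps_eq_iff)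

lemma residue_part_mult_supported:
  assumes S: "supported k 0 S"
  shows "residue_part k c (A * S) = residue_part k c A * S"
proof (rule fps_ext)
  fix n
  have term_eq: "(if n mod k = c then fps_nth A i else 0) * fps_nth S (n - i)
      = fps_nth (residue_part k c A) i * fps_nth S (n - i)" if "i \<le> n" for i
  proof (cases "(n - i) mod k = 0")
    case True
    then have "n mod k = i mod k"
      using that by (metis add_0_right le_add_diff_inverse mod_add_right_eq)
    then show ?thesis by (simp add: residue_part_def)
  qed (use S in \<open>simp add: supported_def\<close>)
  have "fps_nth (residue_part k c (A * S)) n
      = (\<Sum>i=0..n. (if n mod k = c then fps_nth A i else 0) * fps_nth S (n - i))"
    by (simp add: residue_part_def fps_mult_nth sum_distrib_left)
  also have "\<dots> = fps_nth (residue_part k c A * S) n"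
    by (simp add: fps_mult_nth term_eq)
  finally show "fps_nth (residue_part k c (A * S)) n = fps_nth (residue_part k c A * S) n" .
qed

text \<open>The operation that makes the dissection of \<open>1/\<phi>\<close> work:
  \<open>decimate k (A * B(X^k)) = decimate k A * B\<close>.\<close>

lemma decimate_mult_dilate:
  assumes k: "0 < k"
  shows "decimate k (A * dilate k B) = decimate k A * B"
proof (rule dilate_inj[OF k])
  have "dilate k (decimate k (A * dilate k B)) = residue_part k 0 (A * dilate k B)"
    using k by (simp add: residue_part_zero)
  also have "\<dots> = residue_part k 0 A * dilate k B"
    by (rule residue_part_mult_supported[OF supported_dilate])
  also have "\<dots> = dilate k (decimate k A * B)"
    using k by (simp add: residue_part_zero dilate_mult)
  finally show "dilate k (decimate k (A * dilate k B)) = dilate k (decimate k A * B)" .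
qed

lemma sign_twist_mult: "sign_twist (A * B) = sign_twist A * sign_twist B"
proof (rule fps_ext)
  fix n
  have "(-1 :: 'a) ^ n = (-1) ^ i * (-1) ^ (n - i)" if "i \<le> n" for i
    using that by (simp add: power_add[symmetric])
  then show "fps_nth (sign_twist (A * B)) n = fps_nth (sign_twist A * sign_twist B) n"
    by (auto simp: sign_twist_def fps_mult_nth sum_distrib_left mult_ac intro!: sum.cong)
qed

lemma sign_twist_power: "sign_twist (A ^ j) = sign_twist A ^ j"
proof (induct j)
  case 0 show ?case by (simp add: sign_twist_def fps_eq_iff)
next
  case (Suc j) then show ?case by (simp add: sign_twist_mult)
qed

lemma decimate_sign_twist: "odd k \<Longrightarrow> decimate k (sign_twist A) = sign_twist (decimate k A)"
  by (simp add: decimate_def sign_twist_def fps_eq_iff power_mult)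

subsection \<open>The Frobenius map in characteristic 5\<close>

lemma power5_type5: "(x :: 5) ^ 5 = x"
proof (induct x rule: bit1_induct)
  case (of_int z)
  then have "z \<in> {0, 1, 2, 3, 4}" by auto
  then show ?case by (auto simp: eval_nat_numeral)
qed

text \<open>Freshman's dream: \<open>5\<close> divides the inner binomial coefficients of \<open>(A + B)^5\<close>.\<close>

lemma frobenius_add: "((A :: 5 fps) + B) ^ 5 = A ^ 5 + B ^ 5"
proof -
  have "(A + B) ^ 5 = A ^ 5 + B ^ 5 + 5 * (A^4 * B + 2 * A^3 * B^2 + 2 * A^2 * B^3 + A * B^4)"
    by (simp add: algebra_simps eval_nat_numeral)
  moreover have "(5 :: 5 fps) = 0"
    by (simp only: numeral_fps_const) simp
  ultimately show ?thesis by simp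
qed

lemma frobenius_sum: "(sum f I :: 5 fps) ^ 5 = (\<Sum>i\<in>I. f i ^ 5)"
  by (induct I rule: infinite_finite_induct) (auto simp: frobenius_add)

text \<open>Over \<open>\<int>/5\<int>\<close>, \<open>A^5 = A(X^5)\<close>: check it on the truncations of \<open>A\<close>, which are
  finite sums of monomials.\<close>

lemma frobenius: "(A :: 5 fps) ^ 5 = dilate 5 A"
proof (rule agree_all)
  fix m
  define S where "S = (\<Sum>i=0..m. fps_const (fps_nth A i) * fps_X ^ i)"
  have "agree m A S"
    by (simp add: agree_def S_def fps_sum_rep_nth)
  then have "agree m (A ^ 5) (S ^ 5)"
    by (rule agree_power)
  moreover have "S ^ 5 = (\<Sum>i=0..m. fps_const (fps_nth A i) * fps_X ^ (5 * i))"
    unfolding S_def frobenius_sum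
    by (simp add: power_mult_distrib power5_type5 power_mult mult.commute)
  moreover have "agree m (\<Sum>i=0..m. fps_const (fps_nth A i) * fps_X ^ (5 * i)) (dilate 5 A)"
    by (auto simp: agree_def dilate_nth fps_sum_nth fps_X_power_nth if_distrib
        cong: if_cong intro!: sum.neutral)
  ultimately show "agree m (A ^ 5) (dilate 5 A)"
    by (metis agree_trans)
qed

definition count_gf :: "'b set \<Rightarrow> ('b \<Rightarrow> nat) \<Rightarrow> 'a::comm_ring_1 fps" where
  "count_gf A f = Abs_fps (\<lambda>n. of_nat (card {x\<in>A. f x = n}))"

definition finite_fibres :: "'b set \<Rightarrow> ('b \<Rightarrow> nat) \<Rightarrow> bool" where
  "finite_fibres A f \<longleftrightarrow> (\<forall>n. finite {x\<in>A. f x = n})"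

lemma count_gf_nth: "fps_nth (count_gf A f) n = of_nat (card {x\<in>A. f x = n})"
  by (simp add: count_gf_def)

lemma count_gf_mult:
  assumes fin: "finite_fibres A f" "finite_fibres B g"
  shows "count_gf A f * count_gf B g = count_gf (A \<times> B) (\<lambda>(x, y). f x + g y)"
proof (rule fps_ext)
  fix n
  have fibre: "{p\<in>A \<times> B. (\<lambda>(x, y). f x + g y) p = n}
      = (\<Union>i\<in>{0..n}. {x\<in>A. f x = i} \<times> {y\<in>B. g y = n - i})"
    by auto
  have "card (\<Union>i\<in>{0..n}. {x\<in>A. f x = i} \<times> {y\<in>B. g y = n - i})
      = (\<Sum>i=0..n. card {x\<in>A. f x = i} * card {y\<in>B. g y = n - i})"
    using fin unfolding finite_fibres_def
    by (subst card_UN_disjoint) (auto simp: card_cartesian_product)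
  then show "fps_nth (count_gf A f * count_gf B g) n = fps_nth (count_gf (A \<times> B) (\<lambda>(x, y). f x + g y)) n"
    by (simp add: fps_mult_nth count_gf_nth fibre)
qed

lemma finite_fibres_product:
  assumes "finite_fibres A f" "finite_fibres B g"
  shows "finite_fibres (A \<times> B) (\<lambda>(x, y). f x + g y)"
  unfolding finite_fibres_def
proof
  fix n
  have "{p\<in>A \<times> B. (\<lambda>(x, y). f x + g y) p = n} \<subseteq> (\<Union>i\<le>n. {x\<in>A. f x = i} \<times> {y\<in>B. g y = n - i})"
    by auto
  then show "finite {p\<in>A \<times> B. (\<lambda>(x, y). f x + g y) p = n}"
    by (rule finite_subset) (use assms in \<open>auto simp: finite_fibres_def\<close>)
qed

subsection \<open>The theta series\<close>

definition square_nat :: "int \<Rightarrow> nat" where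
  "square_nat a = nat (a ^ 2)"

lemma int_square_nat [simp]: "int (square_nat a) = a ^ 2"
  by (simp add: square_nat_def)

text \<open>Integers with a given square are bounded by that square, so the fibres of
  \<open>a \<mapsto> a\<^sup>2\<close> are finite.\<close>

lemma abs_le_square: "\<bar>a :: int\<bar> \<le> a ^ 2"
proof (cases "a = 0")
  case False
  then have "\<bar>a\<bar> * 1 \<le> \<bar>a\<bar> * \<bar>a\<bar>"
    by (intro mult_left_mono) auto
  then show ?thesis by (simp add: power2_eq_square abs_mult_self_eq)
qed simp

lemma square_nat_add_eq: "square_nat a + m = n \<longleftrightarrow> a ^ 2 + int m = int n"
  by (metis int_square_nat of_nat_add of_nat_eq_iff)

lemma finite_fibres_square: "finite_fibres A square_nat"
  unfolding finite_fibres_def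
proof
  fix n
  have "{a\<in>A. square_nat a = n} \<subseteq> {-int n..int n}"
  proof
    fix a assume "a \<in> {a\<in>A. square_nat a = n}"
    then have "a ^ 2 = int n" by auto
    with abs_le_square[of a] show "a \<in> {-int n..int n}" by auto
  qed
  then show "finite {a\<in>A. square_nat a = n}" by (rule finite_subset) simp
qed

definition theta :: "'a::comm_ring_1 fps" where
  "theta = count_gf (UNIV :: int set) square_nat"

lemma theta_nth: "fps_nth theta n = of_nat (card {a :: int. a ^ 2 = int n})"
proof -
  have "{a. square_nat a = n} = {a :: int. a ^ 2 = int n}"
    by (auto simp: square_nat_def)
  then show ?thesis by (simp add: theta_def count_gf_nth)
qed

lemma count_gf_square_mult_nth:
  "fps_nth (count_gf A square_nat * count_gf B square_nat) n
     = of_nat (card {(a, b). a \<in> A \<and> b \<in> B \<and> a ^ 2 + b ^ 2 = int n})"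
proof -
  have "{p\<in>A \<times> B. (\<lambda>(a, b). square_nat a + square_nat b) p = n}
      = {(a, b). a \<in> A \<and> b \<in> B \<and> a ^ 2 + b ^ 2 = int n}"
    by (auto simp: square_nat_add_eq)
  then show ?thesis
    by (simp add: count_gf_mult finite_fibres_square count_gf_nth)
qed

definition two_squares :: "int \<Rightarrow> (int \<times> int) set" where
  "two_squares m = {(a, b). a ^ 2 + b ^ 2 = m}"

definition three_squares :: "int \<Rightarrow> (int \<times> int \<times> int) set" where
  "three_squares m = {(a, b, c). a ^ 2 + b ^ 2 + c ^ 2 = m}"

lemma theta_square_nth: "fps_nth (theta * theta) n = of_nat (card (two_squares (int n)))"
  by (simp add: theta_def count_gf_square_mult_nth two_squares_def)

lemma theta_cube_nth: "fps_nth (theta ^ 3) n = of_nat (card (three_squares (int n)))"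
proof -
  let ?w = "\<lambda>(a, p). square_nat a + (\<lambda>(b, c). square_nat b + square_nat c) p"
  have "theta ^ 3 = count_gf (UNIV :: int set) square_nat
      * count_gf (UNIV \<times> UNIV) (\<lambda>(b, c). square_nat b + square_nat c)"
    by (simp add: theta_def eval_nat_numeral count_gf_mult finite_fibres_square)
  also have "\<dots> = count_gf (UNIV \<times> UNIV \<times> UNIV) ?w"
    by (intro count_gf_mult finite_fibres_square finite_fibres_product)
  finally have cube: "theta ^ 3 = count_gf UNIV ?w"
    by simp
  have "{x \<in> UNIV. ?w x = n} = three_squares (int n)"
    by (auto simp: three_squares_def square_nat_add_eq algebra_simps)
  then show ?thesis
    by (simp add: cube count_gf_nth)
qed

lemma finite_two_squares: "finite (two_squares m)"
proof (rule finite_subset)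
  show "two_squares m \<subseteq> {-\<bar>m\<bar>..\<bar>m\<bar>} \<times> {-\<bar>m\<bar>..\<bar>m\<bar>}"
  proof
    fix p assume "p \<in> two_squares m"
    then obtain a b where p: "p = (a, b)" and "a ^ 2 + b ^ 2 = m"
      by (auto simp: two_squares_def)
    moreover have "0 \<le> a ^ 2" "0 \<le> b ^ 2" by simp_all
    ultimately have "\<bar>a\<bar> \<le> \<bar>m\<bar>" "\<bar>b\<bar> \<le> \<bar>m\<bar>"
      using abs_le_square[of a] abs_le_square[of b] by linarith+
    then show "p \<in> {-\<bar>m\<bar>..\<bar>m\<bar>} \<times> {-\<bar>m\<bar>..\<bar>m\<bar>}"
      using p by (auto simp: abs_le_iff)
  qed
qed simp

text \<open>Since \<open>(2a + b)(2a - b) = 5a\<^sup>2 - (a\<^sup>2 + b\<^sup>2)\<close>, a solution of \<open>a\<^sup>2 + b\<^sup>2 = 5m\<close> has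
  \<open>5 | 2a + b\<close> or \<open>5 | 2a - b\<close>, and both hold exactly when \<open>5\<close> divides \<open>a\<close> and \<open>b\<close>.\<close>

lemma two_squares_five_dvd:
  assumes "a ^ 2 + b ^ 2 = 5 * (m::int)"
  shows "5 dvd 2 * a + b \<or> 5 dvd 2 * a - b"
proof -
  have "(2 * a + b) * (2 * a - b) = 5 * (a ^ 2 - m)"
    using assms by (simp add: algebra_simps power2_eq_square)
  then have "(5::int) dvd (2 * a + b) * (2 * a - b)" by simp
  then show ?thesis
    by (simp add: prime_dvd_mult_iff)
qed

lemma five_dvd_both:
  assumes "(5::int) dvd 2 * a + b" "5 dvd 2 * a - b"
  shows "5 dvd a \<and> 5 dvd b"
proof -
  have "(5::int) dvd (2 * a + b) + (2 * a - b)"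
    using assms by (rule dvd_add)
  then have "(5::int) dvd 5 * a - 4 * a"
    by (intro dvd_diff) (auto simp: algebra_simps)
  then have a: "(5::int) dvd a"
    by simp
  then have "(5::int) dvd (2 * a + b) - 2 * a"
    using assms(1) by (intro dvd_diff) auto
  with a show ?thesis by simp
qed

text \<open>The solutions of \<open>a\<^sup>2 + b\<^sup>2 = 5m\<close> with \<open>5 | 2a + b\<close> are exactly the images
  \<open>(2x - y, x + 2y)\<close> of the solutions of \<open>x\<^sup>2 + y\<^sup>2 = m\<close> (multiplication by \<open>2 + i\<close>).\<close>

lemma card_two_squares_plus_class:
  "card {(a, b). (a, b) \<in> two_squares (5 * m) \<and> 5 dvd 2 * a + b} = card (two_squares m)"
proof (rule bij_betw_same_card[of "\<lambda>(x, y). (2 * x - y, x + 2 * y)", symmetric], rule bij_betwI')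
  fix p q :: "int \<times> int"
  show "((\<lambda>(x, y). (2 * x - y, x + 2 * y)) p = (\<lambda>(x, y). (2 * x - y, x + 2 * y)) q) = (p = q)"
    by (cases p; cases q) auto
next
  fix p assume "p \<in> two_squares m"
  then obtain x y where "p = (x, y)" "x ^ 2 + y ^ 2 = m"
    by (auto simp: two_squares_def)
  moreover have "(2 * x - y) ^ 2 + (x + 2 * y) ^ 2 = 5 * (x ^ 2 + y ^ 2)"
    "2 * (2 * x - y) + (x + 2 * y) = 5 * x"
    by (simp_all add: algebra_simps power2_eq_square)
  ultimately show "(\<lambda>(x, y). (2 * x - y, x + 2 * y)) p
      \<in> {(a, b). (a, b) \<in> two_squares (5 * m) \<and> 5 dvd 2 * a + b}"
    by (simp add: two_squares_def)
next
  fix q assume "q \<in> {(a, b). (a, b) \<in> two_squares (5 * m) \<and> 5 dvd 2 * a + b}"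
  then obtain a b c where q: "q = (a, b)" "a ^ 2 + b ^ 2 = 5 * m" "2 * a + b = 5 * c"
    by (auto simp: two_squares_def elim!: dvdE)
  have b: "b = 5 * c - 2 * a"
    using q(3) by simp
  have "5 * (c ^ 2 + (2 * c - a) ^ 2) = a ^ 2 + (5 * c - 2 * a) ^ 2"
    by (simp add: algebra_simps power2_eq_square)
  then have "(c, 2 * c - a) \<in> two_squares m"
    using q(2) by (simp add: two_squares_def b)
  moreover have "q = (2 * c - (2 * c - a), c + 2 * (2 * c - a))"
    using q by simp
  ultimately show "\<exists>p\<in>two_squares m. q = (\<lambda>(x, y). (2 * x - y, x + 2 * y)) p"
    by (intro bexI[of _ "(c, 2 * c - a)"]) auto
qed

text \<open>The solutions with \<open>5 | 2a - b\<close> are the mirror images \<open>b \<mapsto> -b\<close> of those with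
  \<open>5 | 2a + b\<close>; inclusion-exclusion gives \<open>r\<^sub>2(5m) + #{5 | a, 5 | b} = 2 r\<^sub>2(m)\<close>.\<close>

lemma two_squares_five_mult:
  "card (two_squares (5 * m)) + card {(a, b). 5 dvd a \<and> 5 dvd b \<and> a ^ 2 + b ^ 2 = 5 * m}
     = 2 * card (two_squares m)"
proof -
  define plus where "plus = {(a, b). (a, b) \<in> two_squares (5 * m) \<and> 5 dvd 2 * a + b}"
  define minus where "minus = {(a, b). (a, b) \<in> two_squares (5 * m) \<and> 5 dvd 2 * a - b}"
  have finite: "finite plus" "finite minus"
    unfolding plus_def minus_def
    by (auto intro: finite_subset[OF _ finite_two_squares[of "5 * m"]])
  have union: "plus \<union> minus = two_squares (5 * m)"
  proof
    show "two_squares (5 * m) \<subseteq> plus \<union> minus"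
    proof
      fix p assume p: "p \<in> two_squares (5 * m)"
      then obtain a b where "p = (a, b)" "a ^ 2 + b ^ 2 = 5 * m"
        by (auto simp: two_squares_def)
      with two_squares_five_dvd p show "p \<in> plus \<union> minus"
        by (auto simp: plus_def minus_def)
    qed
  qed (auto simp: plus_def minus_def)
  have inter: "plus \<inter> minus = {(a, b). 5 dvd a \<and> 5 dvd b \<and> a ^ 2 + b ^ 2 = 5 * m}"
  proof
    show "plus \<inter> minus \<subseteq> {(a, b). 5 dvd a \<and> 5 dvd b \<and> a ^ 2 + b ^ 2 = 5 * m}"
    proof clarify
      fix a b :: int assume "(a, b) \<in> plus" "(a, b) \<in> minus"
      then have "(5::int) dvd 2 * a + b" "(5::int) dvd 2 * a - b" "a ^ 2 + b ^ 2 = 5 * m"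
        by (auto simp: plus_def minus_def two_squares_def)
      then show "5 dvd a \<and> 5 dvd b \<and> a ^ 2 + b ^ 2 = 5 * m"
        using five_dvd_both by blast
    qed
    show "{(a, b). 5 dvd a \<and> 5 dvd b \<and> a ^ 2 + b ^ 2 = 5 * m} \<subseteq> plus \<inter> minus"
    proof clarify
      fix a b :: int assume "5 dvd a" "5 dvd b" "a ^ 2 + b ^ 2 = 5 * m"
      moreover from \<open>5 dvd a\<close> \<open>5 dvd b\<close> have "5 dvd 2 * a + b" "5 dvd 2 * a - b"
        by simp_all
      ultimately show "(a, b) \<in> plus \<inter> minus"
        by (simp add: plus_def minus_def two_squares_def)
    qed
  qed
  have "bij_betw (\<lambda>(a, b). (a, - b)) plus minus"
  proof (rule bij_betw_byWitness[where f' = "\<lambda>(a, b). (a, - b)"])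
    show "(\<lambda>(a, b). (a, - b)) ` plus \<subseteq> minus" "(\<lambda>(a, b). (a, - b)) ` minus \<subseteq> plus"
      by (auto simp: plus_def minus_def two_squares_def)
  qed auto
  then have "card minus = card plus"
    by (simp add: bij_betw_same_card)
  moreover have "card plus = card (two_squares m)"
    unfolding plus_def by (rule card_two_squares_plus_class)
  ultimately show ?thesis
    using card_Un_Int[OF finite] union inter by simp
qed

text \<open>A sum of three squares divisible by \<open>4\<close> has only even summands, since odd
  squares are \<open>1\<close> modulo \<open>4\<close>; so \<open>r\<^sub>3(4m) = r\<^sub>3(m)\<close>.\<close>

lemma square_mod_four: "(a::int) ^ 2 mod 4 = (if even a then 0 else 1)"
proof (cases "even a")
  case False
  then obtain k where "a = 2 * k + 1" by (auto elim: oddE)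
  define j where "j = k * k + k"
  have "a ^ 2 = 4 * j + 1"
    using \<open>a = 2 * k + 1\<close> by (simp add: j_def algebra_simps power2_eq_square)
  moreover have "(4 * j + 1) mod 4 = 1" by presburger
  ultimately show ?thesis using False by simp
next
  case True
  then obtain k where "a = 2 * k" by blast
  then show ?thesis by (simp add: power2_eq_square)
qed

lemma three_squares_four_mult_even:
  assumes "a ^ 2 + b ^ 2 + c ^ 2 = 4 * (m::int)"
  shows "even a \<and> even b \<and> even c"
proof -
  have mod_sum: "(x + y + z) mod 4 = (x mod 4 + y mod 4 + z mod 4) mod 4" for x y z :: int
    by presburger
  moreover have "(a ^ 2 + b ^ 2 + c ^ 2) mod 4 = 0"
    using assms by simp
  ultimately have "(a ^ 2 mod 4 + b ^ 2 mod 4 + c ^ 2 mod 4) mod 4 = 0"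
    by simp
  then show ?thesis
    unfolding square_mod_four by (cases "even a"; cases "even b"; cases "even c") simp_all
qed

lemma three_squares_four_mult: "card (three_squares (4 * m)) = card (three_squares m)"
proof -
  have "three_squares (4 * m) = (\<lambda>(a, b, c). (2 * a, 2 * b, 2 * c)) ` three_squares m"
  proof (intro equalityI subsetI)
    fix p assume "p \<in> three_squares (4 * m)"
    then obtain a b c where p: "p = (a, b, c)" "a ^ 2 + b ^ 2 + c ^ 2 = 4 * m"
      by (auto simp: three_squares_def)
    then obtain x y z where "a = 2 * x" "b = 2 * y" "c = 2 * z"
      using three_squares_four_mult_even by (meson evenE)
    with p show "p \<in> (\<lambda>(a, b, c). (2 * a, 2 * b, 2 * c)) ` three_squares m"
      by (auto simp: three_squares_def power_mult_distrib image_iff)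
  qed (auto simp: three_squares_def power_mult_distrib)
  moreover have "inj_on (\<lambda>(a, b, c). (2 * a, 2 * b, 2 * c :: int)) (three_squares m)"
    by (auto simp: inj_on_def)
  ultimately show ?thesis
    by (simp add: card_image)
qed

subsection \<open>The 5-dissection of the theta series\<close>

text \<open>Squares are \<open>0\<close>, \<open>1\<close> or \<open>4\<close> modulo \<open>5\<close>, so \<open>\<theta>\<close> splits into three residue parts.\<close>

definition theta_part :: "nat \<Rightarrow> 'a::comm_ring_1 fps" where
  "theta_part c = residue_part 5 c theta"

lemma square_mod_five: "(a::int) ^ 2 mod 5 \<in> {0, 1, 4}"
proof -
  have "a ^ 2 mod 5 = (a mod 5) ^ 2 mod 5" by (simp add: power_mod)
  moreover have "a mod 5 \<in> {0, 1, 2, 3, 4}" by auto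
  ultimately show ?thesis by (auto simp: power2_eq_square)
qed

lemma theta_nth_nonzero: "fps_nth theta n \<noteq> 0 \<Longrightarrow> n mod 5 \<in> {0, 1, 4}"
proof -
  assume "fps_nth theta n \<noteq> 0"
  then obtain a :: int where "a ^ 2 = int n"
    by (fastforce simp: theta_nth)
  then have "int (n mod 5) = a ^ 2 mod 5"
    by (simp add: zmod_int)
  then show ?thesis
    using square_mod_five[of a] by auto
qed

lemma theta_dissection: "theta = theta_part 0 + theta_part 1 + theta_part 4"
proof (rule fps_ext)
  fix n
  show "fps_nth theta n = fps_nth (theta_part 0 + theta_part 1 + theta_part 4 :: 'a fps) n"
  proof (cases "fps_nth (theta :: 'a fps) n = 0")
    case False
    then have "n mod 5 \<in> {0, 1, 4}" by (rule theta_nth_nonzero)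
    then show ?thesis by (auto simp: theta_part_def residue_part_def)
  qed (auto simp: theta_part_def residue_part_def)
qed

lemma supported_theta_part: "c < 5 \<Longrightarrow> supported 5 c (theta_part c)"
  using supported_residue_part[of 5 c theta] by (simp add: theta_part_def)

lemma theta_part_zero: "theta_part 0 = count_gf {a :: int. 5 dvd a} square_nat"
proof (rule fps_ext)
  fix n
  have "5 dvd a \<longleftrightarrow> n mod 5 = 0" if "a ^ 2 = int n" for a :: int
  proof -
    have "5 dvd a \<longleftrightarrow> 5 dvd a ^ 2"
      by (simp add: prime_dvd_power_iff)
    also have "\<dots> \<longleftrightarrow> n mod 5 = 0"
      using that by presburger
    finally show ?thesis .
  qed
  then have "{a \<in> {a. 5 dvd a}. square_nat a = n}
      = (if n mod 5 = 0 then {a. a ^ 2 = int n} else {})"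
    by (auto simp: square_nat_def)
  then show "fps_nth (theta_part 0) n = fps_nth (count_gf {a :: int. 5 dvd a} square_nat) n"
    by (simp add: theta_part_def residue_part_def theta_nth count_gf_nth)
qed

lemma theta_square_residue_zero:
  "residue_part 5 0 (theta * theta) + theta_part 0 * theta_part 0 = 2 * dilate 5 (theta * theta)"
proof (rule fps_ext)
  fix n
  have zero_part: "supported 5 0 (theta_part 0 * theta_part 0)"
    using supported_mult[OF supported_theta_part supported_theta_part, of 0 0] by simp
  show "fps_nth (residue_part 5 0 (theta * theta) + theta_part 0 * theta_part 0) n
      = fps_nth (2 * dilate 5 (theta * theta)) n"
  proof (cases "5 dvd n")
    case True
    then obtain m where n: "n = 5 * m" by blast
    have "fps_nth (residue_part 5 0 (theta * theta) + theta_part 0 * theta_part 0) n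
        = of_nat (card (two_squares (5 * int m))
            + card {(a, b). 5 dvd a \<and> 5 dvd b \<and> a ^ 2 + b ^ 2 = 5 * int m})"
      by (simp add: n residue_part_def theta_square_nth theta_part_zero count_gf_square_mult_nth)
    also have "\<dots> = of_nat (2 * card (two_squares (int m)))"
      by (simp only: two_squares_five_mult)
    also have "\<dots> = fps_nth (2 * dilate 5 (theta * theta)) n"
      by (simp add: n dilate_nth theta_square_nth numeral_fps_const)
    finally show ?thesis .
  next
    case False
    then show ?thesis
      using zero_part by (auto simp: residue_part_def dilate_nth numeral_fps_const supported_def)
  qed
qed

definition theta_monomial :: "nat \<Rightarrow> nat \<Rightarrow> nat \<Rightarrow> 'a::comm_ring_1 fps" where
  "theta_monomial a b c = theta_part 0 ^ a * theta_part 1 ^ b * theta_part 4 ^ c"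

lemma supported_theta_monomial: "supported 5 ((b + 4 * c) mod 5) (theta_monomial a b c)"
proof -
  have "supported 5 ((((0 * a) mod 5 + (1 * b) mod 5) mod 5 + (4 * c) mod 5) mod 5)
      (theta_part 0 ^ a * theta_part 1 ^ b * theta_part 4 ^ c)"
    by (intro supported_mult supported_power supported_theta_part) simp_all
  then show ?thesis
    by (simp add: theta_monomial_def mod_add_eq)
qed

lemma residue_part_zero_theta_monomial:
  "residue_part 5 0 (theta_monomial a b c)
     = (if (b + 4 * c) mod 5 = 0 then theta_monomial a b c else 0)"
proof -
  have "residue_part 5 0 (theta_monomial a b c)
      = (if 0 = (b + 4 * c) mod 5 then theta_monomial a b c else 0)"
    by (rule residue_part_supported[OF supported_theta_monomial]) simp
  then show ?thesis by auto
qed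

lemma residue_part_zero_numeral_theta_monomial:
  "residue_part 5 0 (numeral k * theta_monomial a b c)
     = (if (b + 4 * c) mod 5 = 0 then numeral k * theta_monomial a b c else 0)"
  by (simp add: residue_part_numeral_mult residue_part_zero_theta_monomial)

lemma theta_square_expansion:
  "theta * theta = theta_monomial 2 0 0 + theta_monomial 0 2 0 + theta_monomial 0 0 2
     + 2 * theta_monomial 1 1 0 + 2 * theta_monomial 1 0 1 + 2 * theta_monomial 0 1 1"
  unfolding theta_dissection[where 'a = 'a] theta_monomial_def
  by (simp add: algebra_simps eval_nat_numeral)

lemma theta_fourth_expansion:
  "theta ^ 4 = theta_monomial 4 0 0 + 4 * theta_monomial 3 1 0 + 4 * theta_monomial 3 0 1
     + 6 * theta_monomial 2 2 0 + 6 * theta_monomial 2 0 2 + 12 * theta_monomial 2 1 1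
     + 4 * theta_monomial 1 3 0 + 4 * theta_monomial 1 0 3 + 12 * theta_monomial 1 2 1
     + 12 * theta_monomial 1 1 2 + theta_monomial 0 4 0 + theta_monomial 0 0 4
     + 4 * theta_monomial 0 3 1 + 4 * theta_monomial 0 1 3 + 6 * theta_monomial 0 2 2"
  unfolding theta_dissection[where 'a = 'a] theta_monomial_def
  by (simp add: algebra_simps eval_nat_numeral)

text \<open>Numerals are compared in the coefficient ring, so in \<open>(\<int>/5\<int>)[[X]]\<close> they reduce
  modulo \<open>5\<close>.\<close>

lemma numeral_fps_eq_iff: "(numeral a :: 'a::comm_ring_1 fps) = numeral b \<longleftrightarrow> (numeral a :: 'a) = numeral b"
proof
  assume "(numeral a :: 'a fps) = numeral b"
  then have "fps_nth (numeral a :: 'a fps) 0 = fps_nth (numeral b :: 'a fps) 0" by simp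
  then show "(numeral a :: 'a) = numeral b" by (simp add: numeral_fps_const)
qed (simp add: numeral_fps_const)

lemma fps_numerals_type5: "(3 :: 5 fps) * 2 = 1" "(12 :: 5 fps) = 2" "(6 :: 5 fps) = 1"
  by (simp_all only: numeral_times_numeral numeral_fps_eq_iff flip: numeral_One) simp_all

text \<open>Over \<open>\<int>/5\<int>\<close> the identity for two squares determines \<open>\<theta>\<^sub>0\<^sup>2 + \<theta>\<^sub>1 \<theta>\<^sub>4\<close>, and the
  degree-0 part of \<open>\<theta>\<^sup>4\<close> is its square, since \<open>12 = 2\<close> and \<open>6 = 1\<close> there.\<close>

lemma dilate_theta_square:
  "theta_monomial 2 0 0 + theta_monomial 0 1 1 = dilate 5 (theta * theta :: 5 fps)"
proof -
  have "residue_part 5 0 (theta * theta) = theta_monomial 2 0 0 + 2 * (theta_monomial 0 1 1 :: 5 fps)"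
    unfolding theta_square_expansion
    by (simp add: residue_part_add residue_part_zero_theta_monomial
        residue_part_zero_numeral_theta_monomial)
  moreover have "theta_part 0 * theta_part 0 = (theta_monomial 2 0 0 :: 5 fps)"
    by (simp add: theta_monomial_def power2_eq_square)
  ultimately have "2 * (theta_monomial 2 0 0 + theta_monomial 0 1 1) = 2 * dilate 5 (theta * theta :: 5 fps)"
    using theta_square_residue_zero[where 'a = 5] by (simp add: algebra_simps)
  then have "3 * (2 * (theta_monomial 2 0 0 + theta_monomial 0 1 1))
      = 3 * (2 * dilate 5 (theta * theta :: 5 fps))"
    by simp
  then show ?thesis
    by (simp only: mult.assoc[symmetric] fps_numerals_type5 mult_1)
qed

lemma decimate_theta_fourth: "decimate 5 (theta ^ 4 :: 5 fps) = theta ^ 4"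
proof (rule dilate_inj)
  show "0 < (5::nat)" by simp
  have "residue_part 5 0 (theta ^ 4 :: 5 fps)
      = theta_monomial 4 0 0 + 12 * theta_monomial 2 1 1 + 6 * theta_monomial 0 2 2"
    unfolding theta_fourth_expansion
    by (simp add: residue_part_add residue_part_zero_theta_monomial
        residue_part_zero_numeral_theta_monomial)
  also have "\<dots> = theta_monomial 4 0 0 + 2 * theta_monomial 2 1 1 + theta_monomial 0 2 2"
    by (simp only: fps_numerals_type5 mult_1)
  also have "\<dots> = (theta_monomial 2 0 0 + theta_monomial 0 1 1) ^ 2"
    by (simp add: theta_monomial_def algebra_simps eval_nat_numeral)
  also have "\<dots> = dilate 5 (theta * theta) * dilate 5 (theta * theta)"
    by (simp only: dilate_theta_square power2_eq_square)
  also have "\<dots> = dilate 5 (theta ^ 4)"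
    by (simp add: dilate_mult[symmetric] eval_nat_numeral mult_ac)
  finally show "dilate 5 (decimate 5 (theta ^ 4)) = dilate 5 (theta ^ 4 :: 5 fps)"
    by (simp add: residue_part_zero)
qed

subsection \<open>Overpartitions with bounded parts\<close>

text \<open>An overpartition is a partition together with a set of overlined distinct parts,
  so an overpartition of \<open>n\<close> with parts at most \<open>N\<close> is counted by summing \<open>2^d\<close> over
  the partitions of \<open>n\<close> with parts in \<open>{1..N}\<close>, \<open>d\<close> being the number of distinct parts.\<close>

definition bounded_partitions :: "nat \<Rightarrow> nat \<Rightarrow> nat multiset set" where
  "bounded_partitions N n = {M. set_mset M \<subseteq> {1..N} \<and> sum_mset M = n}"

definition bounded_overpartition_count :: "nat \<Rightarrow> nat \<Rightarrow> nat" where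
  "bounded_overpartition_count N n = (\<Sum>M\<in>bounded_partitions N n. 2 ^ card (set_mset M))"

text \<open>A partition with positive parts has at most as many parts as its sum.\<close>

lemma finite_bounded_partitions: "finite (bounded_partitions N n)"
proof (rule finite_subset)
  have "size M \<le> sum_mset M" if "set_mset M \<subseteq> {1..N}" for M
    using that by (induct M) auto
  then show "bounded_partitions N n \<subseteq> (\<Union>s\<le>n. multisets_of_size {1..N} s)"
    by (force simp: bounded_partitions_def multisets_of_size_def)
qed auto

lemma member_le_sum_mset: "x \<in># M \<Longrightarrow> x \<le> sum_mset (M :: nat multiset)"
  using sum_mset.remove[of x M] by simp

text \<open>Parts of a partition of \<open>n\<close> never exceed \<open>n\<close>, so the bound \<open>N\<close> is irrelevant once
  \<open>N \<ge> n\<close>; in particular all overpartitions of \<open>n\<close> are counted for \<open>N = n\<close>.\<close>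

lemma bounded_partitions_large:
  assumes "n \<le> N"
  shows "bounded_partitions N n = bounded_partitions n n"
proof -
  have "set_mset M \<subseteq> {1..N} \<longleftrightarrow> set_mset M \<subseteq> {1..n}" if "sum_mset M = n" for M
  proof -
    have "\<forall>x\<in>#M. x \<le> n"
      using that member_le_sum_mset by blast
    then show ?thesis
      using assms by (auto simp: subset_iff)
  qed
  then show ?thesis
    by (auto simp: bounded_partitions_def)
qed

lemma overpartition_count_bounded: "overpartition_count n = bounded_overpartition_count n n"
proof -
  have "(\<forall>k\<in>#M. 0 < k) \<and> sum_mset M = n \<longleftrightarrow> M \<in> bounded_partitions n n" for M
    by (auto simp: bounded_partitions_def Suc_le_eq dest: member_le_sum_mset)
  then have "overpartitions n = (SIGMA M:bounded_partitions n n. Pow (set_mset M))"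
    by (auto simp: overpartitions_def)
  then show ?thesis
    by (simp add: overpartition_count_def bounded_overpartition_count_def
        finite_bounded_partitions card_Pow)
qed

text \<open>Removing all parts equal to the largest allowed part \<open>N + 1\<close>: a partition with
  parts in \<open>{1..N+1}\<close> is a partition with parts in \<open>{1..N}\<close> plus \<open>j\<close> copies of \<open>N + 1\<close>.\<close>

definition add_copies :: "nat \<Rightarrow> nat \<times> nat multiset \<Rightarrow> nat multiset" where
  "add_copies k = (\<lambda>(j, M). M + replicate_mset j k)"

lemma add_copies_mem:
  assumes "j * Suc N \<le> n" "M \<in> bounded_partitions N (n - j * Suc N)"
  shows "add_copies (Suc N) (j, M) \<in> bounded_partitions (Suc N) n"
proof -
  have "set_mset M \<subseteq> {1..N}" "sum_mset M + j * Suc N = n"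
    using assms by (auto simp: bounded_partitions_def)
  then show ?thesis
    by (auto simp: add_copies_def bounded_partitions_def)
qed

lemma add_copies_surj:
  assumes M: "M \<in> bounded_partitions (Suc N) n"
  obtains j M' where "j * Suc N \<le> n" "M' \<in> bounded_partitions N (n - j * Suc N)"
    "M = add_copies (Suc N) (j, M')"
proof -
  define j where "j = count M (Suc N)"
  define M' where "M' = filter_mset (\<lambda>x. x \<noteq> Suc N) M"
  have M_eq: "M = add_copies (Suc N) (j, M')"
    by (rule multiset_eqI) (auto simp: add_copies_def M'_def j_def)
  then have "sum_mset M' + j * Suc N = n"
    using M by (simp add: add_copies_def bounded_partitions_def)
  moreover have "set_mset M' \<subseteq> {1..N}"
    using M by (auto simp: M'_def bounded_partitions_def le_Suc_eq)
  ultimately show ?thesis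
    using M_eq by (intro that[of j M']) (auto simp: bounded_partitions_def)
qed

lemma add_copies_inj:
  "inj_on (add_copies (Suc N)) (SIGMA j:{j. j * Suc N \<le> n}. bounded_partitions N (n - j * Suc N))"
proof (rule inj_onI, clarify)
  fix j M i L
  assume "M \<in> bounded_partitions N (n - j * Suc N)" "L \<in> bounded_partitions N (n - i * Suc N)"
    and eq: "add_copies (Suc N) (j, M) = add_copies (Suc N) (i, L)"
  then have fresh: "Suc N \<notin># M" "Suc N \<notin># L"
    by (auto simp: bounded_partitions_def)
  have "count (M + replicate_mset j (Suc N)) (Suc N) = count (L + replicate_mset i (Suc N)) (Suc N)"
    using eq by (simp add: add_copies_def)
  then have "j = i"
    using fresh by (simp add: not_in_iff)
  with eq show "j = i \<and> M = L"
    by (simp add: add_copies_def)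
qed

lemma add_copies_image:
  "add_copies (Suc N) ` (SIGMA j:{j. j * Suc N \<le> n}. bounded_partitions N (n - j * Suc N))
     = bounded_partitions (Suc N) n"
proof
  show "add_copies (Suc N) ` (SIGMA j:{j. j * Suc N \<le> n}. bounded_partitions N (n - j * Suc N))
      \<subseteq> bounded_partitions (Suc N) n"
    by (auto intro: add_copies_mem)
  show "bounded_partitions (Suc N) n
      \<subseteq> add_copies (Suc N) ` (SIGMA j:{j. j * Suc N \<le> n}. bounded_partitions N (n - j * Suc N))"
  proof
    fix M assume "M \<in> bounded_partitions (Suc N) n"
    then obtain j M' where "j * Suc N \<le> n" "M' \<in> bounded_partitions N (n - j * Suc N)"
      "M = add_copies (Suc N) (j, M')"
      by (rule add_copies_surj)
    then show "M \<in> add_copies (Suc N) ` (SIGMA j:{j. j * Suc N \<le> n}. bounded_partitions N (n - j * Suc N))"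
      by blast
  qed
qed

text \<open>Hence the recursion: the copies of \<open>N + 1\<close> contribute a factor \<open>2\<close> when present,
  because they form one new distinct part that may be overlined.\<close>

lemma bounded_overpartition_count_Suc:
  "bounded_overpartition_count (Suc N) n
     = (\<Sum>j | j * Suc N \<le> n. (if j = 0 then 1 else 2) * bounded_overpartition_count N (n - j * Suc N))"
proof -
  let ?S = "SIGMA j:{j. j * Suc N \<le> n}. bounded_partitions N (n - j * Suc N)"
  have fin: "finite {j. j * Suc N \<le> n}"
    by (rule finite_subset[of _ "{..n}"]) (auto intro: order.trans[OF _ mult_le_mono2[of 1]])
  have weight: "(2::nat) ^ card (set_mset (add_copies (Suc N) p))
      = (\<lambda>(j, M). (if j = 0 then 1 else 2) * 2 ^ card (set_mset M)) p" if "p \<in> ?S" for p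
  proof -
    obtain j M where p: "p = (j, M)" by (cases p)
    have "Suc N \<notin> set_mset M" using that by (auto simp: p bounded_partitions_def)
    then show ?thesis by (auto simp: p add_copies_def card_insert_if)
  qed
  have "bounded_overpartition_count (Suc N) n = (\<Sum>p\<in>?S. 2 ^ card (set_mset (add_copies (Suc N) p)))"
    unfolding bounded_overpartition_count_def add_copies_image[symmetric]
    by (subst sum.reindex[OF add_copies_inj]) (simp add: comp_def)
  also have "\<dots> = (\<Sum>p\<in>?S. (\<lambda>(j, M). (if j = 0 then 1 else 2) * 2 ^ card (set_mset M)) p)"
    by (rule sum.cong) (simp_all add: weight)
  also have "\<dots> = (\<Sum>j | j * Suc N \<le> n. (if j = 0 then 1 else 2) * bounded_overpartition_count N (n - j * Suc N))"
    using fin finite_bounded_partitions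
    by (subst sum.Sigma[symmetric]) (auto simp: bounded_overpartition_count_def sum_distrib_left simp del: mult_Suc)
  finally show ?thesis .
qed

text \<open>The series \<open>(1 + X^k)/(1 - X^k) = 1 + 2 X^k + 2 X^(2k) + \<dots>\<close>; the generating function
  of overpartitions is the infinite product of these, and the product over \<open>k \<le> N\<close>
  counts overpartitions with parts at most \<open>N\<close>.\<close>

definition overpartition_factor :: "nat \<Rightarrow> 'a::comm_ring_1 fps" where
  "overpartition_factor k = Abs_fps (\<lambda>n. if n = 0 then 1 else if k dvd n then 2 else 0)"

definition overpartition_product :: "nat \<Rightarrow> 'a::comm_ring_1 fps" where
  "overpartition_product N = (\<Prod>i<N. overpartition_factor (Suc i))"

definition overpartition_gf :: "'a::comm_ring_1 fps" where
  "overpartition_gf = Abs_fps (\<lambda>n. of_nat (overpartition_count n))"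

lemma overpartition_factor_one_minus_X_power:
  assumes k: "0 < k"
  shows "overpartition_factor k * (1 - fps_X ^ k) = (1 + fps_X ^ k :: 'a::comm_ring_1 fps)"
proof (rule fps_ext)
  fix n
  have "fps_nth (overpartition_factor k * (1 - fps_X ^ k) :: 'a fps) n
      = fps_nth (overpartition_factor k) n - (if n < k then 0 else fps_nth (overpartition_factor k) (n - k))"
    by (simp add: algebra_simps fps_X_power_mult_right_nth)
  also have "\<dots> = fps_nth (1 + fps_X ^ k :: 'a fps) n"
  proof (cases "n < k")
    case True
    then have "\<not> k dvd n \<or> n = 0" using k by (auto dest: dvd_imp_le)
    then show ?thesis using True by (auto simp: overpartition_factor_def)
  next
    case False
    then have "k dvd n \<longleftrightarrow> k dvd (n - k)" by (simp add: dvd_minus_self)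
    then show ?thesis using False k by (auto simp: overpartition_factor_def)
  qed
  finally show "fps_nth (overpartition_factor k * (1 - fps_X ^ k) :: 'a fps) n = fps_nth (1 + fps_X ^ k :: 'a fps) n" .
qed

lemma overpartition_factor_mult_nth:
  assumes "0 < k"
  shows "fps_nth (overpartition_factor k * A) n
    = (\<Sum>j | j * k \<le> n. (if j = 0 then 1 else 2) * fps_nth A (n - j * k))"
proof -
  have "fps_nth (overpartition_factor k * A) n = (\<Sum>i=0..n. fps_nth (overpartition_factor k) i * fps_nth A (n - i))"
    by (simp add: fps_mult_nth)
  also have "\<dots> = (\<Sum>i\<in>(\<lambda>j. j * k) ` {j. j * k \<le> n}. fps_nth (overpartition_factor k) i * fps_nth A (n - i))"
    by (rule sum.mono_neutral_right) (auto simp: overpartition_factor_def image_iff mult.commute elim!: dvdE)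
  also have "\<dots> = (\<Sum>j | j * k \<le> n. fps_nth (overpartition_factor k) (j * k) * fps_nth A (n - j * k))"
    using assms by (subst sum.reindex) (auto simp: inj_on_def)
  also have "\<dots> = (\<Sum>j | j * k \<le> n. (if j = 0 then 1 else 2) * fps_nth A (n - j * k))"
    using assms by (intro sum.cong) (auto simp: overpartition_factor_def)
  finally show ?thesis .
qed

lemma overpartition_product_nth:
  "fps_nth (overpartition_product N :: 'a::comm_ring_1 fps) n = of_nat (bounded_overpartition_count N n)"
proof (induct N arbitrary: n)
  case 0
  have "bounded_partitions 0 n = (if n = 0 then {{#}} else {})"
    by (auto simp: bounded_partitions_def)
  then show ?case
    by (simp add: overpartition_product_def bounded_overpartition_count_def)
next
  case (Suc N)
  have "overpartition_product (Suc N) = (overpartition_factor (Suc N) :: 'a fps) * overpartition_product N"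
    by (simp add: overpartition_product_def mult.commute)
  then show ?case
    by (auto simp: overpartition_factor_mult_nth Suc bounded_overpartition_count_Suc of_nat_sum
        intro!: sum.cong)
qed

lemma overpartition_gf_agree: "agree (N + 1) (overpartition_gf :: 'a::comm_ring_1 fps) (overpartition_product N)"
  unfolding agree_def
proof (intro allI impI)
  fix i assume "i < N + 1"
  then have "bounded_partitions N i = bounded_partitions i i"
    by (intro bounded_partitions_large) simp
  then have "bounded_overpartition_count N i = bounded_overpartition_count i i"
    by (simp add: bounded_overpartition_count_def)
  then show "fps_nth overpartition_gf i = fps_nth (overpartition_product N :: 'a fps) i"
    by (simp add: overpartition_gf_def overpartition_product_nth overpartition_count_bounded)
qed

subsection \<open>Gaussian binomial coefficients\<close>

fun gauss_binomial :: "'a::comm_ring_1 \<Rightarrow> nat \<Rightarrow> nat \<Rightarrow> 'a" where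
  "gauss_binomial q 0 j = (if j = 0 then 1 else 0)"
| "gauss_binomial q (Suc m) j =
     (if j = 0 then 1 else gauss_binomial q m j + q ^ (Suc m - j) * gauss_binomial q m (j - 1))"

definition qpoch :: "'a::comm_ring_1 \<Rightarrow> nat \<Rightarrow> 'a" where
  "qpoch q n = (\<Prod>i<n. 1 - q ^ Suc i)"

lemma qpoch_Suc: "qpoch q (Suc n) = qpoch q n * (1 - q ^ Suc n)"
  by (simp add: qpoch_def)

lemma gauss_binomial_0 [simp]: "gauss_binomial q m 0 = 1"
  by (cases m) auto

lemma gauss_binomial_above: "m < j \<Longrightarrow> gauss_binomial q m j = 0"
  by (induct m arbitrary: j) auto

lemma gauss_binomial_diag: "gauss_binomial q m m = 1"
  by (induct m) (auto simp: gauss_binomial_above)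

lemma gauss_binomial_qpoch:
  "j \<le> m \<Longrightarrow> gauss_binomial q m j * qpoch q j * qpoch q (m - j) = qpoch q m"
proof (induct m arbitrary: j)
  case 0 then show ?case by (simp add: qpoch_def)
next
  case (Suc m)
  consider "j = 0" | "j = Suc m" | i where "j = Suc i" "i < m"
    using Suc.prems by (cases j) (auto simp: le_less)
  then show ?case
  proof cases
    case 3
    then have i: "i \<le> m" "j \<le> m" "m - i = Suc (m - j)" "Suc m - j = Suc (m - j)"
      by auto
    have IH1: "gauss_binomial q m j * qpoch q j * qpoch q (m - j) = qpoch q m"
      using Suc.hyps[OF i(2)] .
    have IH2: "gauss_binomial q m i * qpoch q i * qpoch q (m - i) = qpoch q m"
      using Suc.hyps[OF i(1)] .
    have "gauss_binomial q (Suc m) j * qpoch q j * qpoch q (Suc m - j)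
        = (gauss_binomial q m j * qpoch q j * qpoch q (m - j)) * (1 - q ^ Suc (m - j))
          + q ^ Suc (m - j) * (gauss_binomial q m i * qpoch q i * qpoch q (m - i)) * (1 - q ^ j)"
      unfolding i(4) by (simp add: 3 qpoch_Suc i(3) algebra_simps)
    also have "\<dots> = qpoch q m * (1 - q ^ Suc (m - j) + q ^ Suc (m - j) - q ^ Suc (m - j) * q ^ j)"
      unfolding IH1 IH2 by (simp add: algebra_simps)
    also have "Suc (m - j) + j = Suc m"
      using i by simp
    then have "q ^ Suc (m - j) * q ^ j = q ^ Suc m"
      by (metis power_add)
    finally show ?thesis by (simp add: qpoch_Suc)
  qed (simp_all add: gauss_binomial_above gauss_binomial_diag qpoch_def)
qed

definition triangular :: "nat \<Rightarrow> nat" where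
  "triangular j = j * (j - 1) div 2"

lemma triangular_0 [simp]: "triangular 0 = 0"
  by (simp add: triangular_def)

lemma triangular_Suc: "triangular (Suc i) = triangular i + i"
proof -
  have "Suc i * i = i * (i - 1) + 2 * i" by (cases i) (auto simp: algebra_simps)
  moreover have "even (i * (i - 1))" by (cases i) auto
  ultimately show ?thesis unfolding triangular_def by auto
qed

lemma cauchy_binomial:
  "(\<Prod>i<m. y + z * q ^ i) = (\<Sum>j\<le>m. q ^ triangular j * gauss_binomial q m j * z ^ j * y ^ (m - j))"
proof (induct m)
  case 0 then show ?case by simp
next
  case (Suc m)
  define S where "S = (\<Sum>j\<le>m. q ^ triangular j * gauss_binomial q m j * z ^ j * y ^ (m - j))"
  define a where "a j = q ^ triangular j * gauss_binomial q m j * z ^ j * y ^ (Suc m - j)" for j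
  define b where "b j = (if j = 0 then 0 else
      q ^ triangular j * q ^ (Suc m - j) * gauss_binomial q m (j - 1) * z ^ j * y ^ (Suc m - j))" for j
  have "(\<Sum>j\<le>Suc m. q ^ triangular j * gauss_binomial q (Suc m) j * z ^ j * y ^ (Suc m - j))
      = (\<Sum>j\<le>Suc m. a j + b j)"
    by (rule sum.cong) (auto simp: a_def b_def algebra_simps)
  also have "\<dots> = (\<Sum>j\<le>Suc m. a j) + (\<Sum>j\<le>Suc m. b j)"
    by (rule sum.distrib)
  also have "(\<Sum>j\<le>Suc m. a j) = y * S"
  proof -
    have "(\<Sum>j\<le>Suc m. a j) = (\<Sum>j\<le>m. y * (q ^ triangular j * gauss_binomial q m j * z ^ j * y ^ (m - j)))"
      by (auto simp: a_def gauss_binomial_above Suc_diff_le algebra_simps intro!: sum.cong)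
    then show ?thesis by (simp add: S_def sum_distrib_left)
  qed
  also have "(\<Sum>j\<le>Suc m. b j) = z * q ^ m * S"
  proof -
    have "(\<Sum>j\<le>Suc m. b j) = b 0 + (\<Sum>i\<le>m. b (Suc i))"
      by (rule sum.atMost_Suc_shift)
    also have "\<dots> = (\<Sum>i\<le>m. z * q ^ m * (q ^ triangular i * gauss_binomial q m i * z ^ i * y ^ (m - i)))"
    proof (simp add: b_def, rule sum.cong)
      fix i assume "i \<in> {..m}"
      then have "q ^ triangular (Suc i) * q ^ (m - i) = q ^ m * q ^ triangular i"
        by (simp add: triangular_Suc add.commute flip: power_add)
      then show "q ^ triangular (Suc i) * q ^ (m - i) * gauss_binomial q m i * (z * z ^ i) * y ^ (m - i)
          = z * q ^ m * (q ^ triangular i * gauss_binomial q m i * z ^ i * y ^ (m - i))"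
        by (simp add: algebra_simps)
    qed simp
    finally show ?thesis by (simp add: S_def sum_distrib_left)
  qed
  finally show ?case using Suc by (simp add: S_def algebra_simps)
qed

subsection \<open>A finite form of the Jacobi triple product\<close>

text \<open>With \<open>y = q^(2M-1)\<close>, \<open>z = -1\<close> and base \<open>q\<^sup>2\<close>, Cauchy's theorem expands
  \<open>\<Prod>\<^sub>i\<^sub><\<^sub>2\<^sub>M (q^(2M-1) - q^(2i))\<close>; the product is, up to a sign and a power of \<open>q\<close>, the square
  of \<open>\<Prod>\<^sub>i\<^sub><\<^sub>M (1 - q^(2i+1))\<close>, and the exponents become \<open>(j - M)\<^sup>2\<close> plus a constant.\<close>

definition odd_qpoch :: "'a::comm_ring_1 \<Rightarrow> nat \<Rightarrow> 'a" where
  "odd_qpoch q M = (\<Prod>i<M. 1 - q ^ (2 * i + 1))"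

definition centre_dist :: "nat \<Rightarrow> nat \<Rightarrow> nat" where
  "centre_dist M j = (if M \<le> j then j - M else M - j)"

definition exponent_shift :: "nat \<Rightarrow> nat" where
  "exponent_shift M = M * (M - 1) + (2 * M - 1) * M"

lemma int_centre_dist_square: "int (centre_dist M j) ^ 2 = (int j - int M) ^ 2"
  by (auto simp: centre_dist_def of_nat_diff power2_eq_square algebra_simps)

lemma prod_lessThan_add:
  fixes f :: "nat \<Rightarrow> 'a::comm_monoid_mult"
  shows "(\<Prod>i<a + b. f i) = (\<Prod>i<a. f i) * (\<Prod>i<b. f (a + i))"
  by (induct b) (auto simp: algebra_simps)

lemma prod_even_powers: "(\<Prod>i<M. (q::'a::comm_ring_1) ^ (2 * i)) = q ^ (M * (M - 1))"
proof (induct M)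
  case (Suc M)
  have "(\<Prod>i<Suc M. q ^ (2 * i)) = q ^ (M * (M - 1) + 2 * M)"
    using Suc by (simp add: power_add)
  also have "M * (M - 1) + 2 * M = Suc M * (Suc M - 1)"
    by (cases M) auto
  finally show ?case .
qed simp

lemma exponent_identity:
  assumes "j \<le> 2 * M" "1 \<le> M"
  shows "2 * triangular j + (2 * M - 1) * (2 * M - j) = centre_dist M j ^ 2 + exponent_shift M"
proof -
  have "even (j * (j - 1))" by (cases j) auto
  then have "2 * triangular j = j * (j - 1)"
    by (simp add: triangular_def)
  then have "int (2 * triangular j) = int (j * (j - 1))"
    by (simp only:)
  then have "2 * int (triangular j) = int j * (int j - 1)"
    by (cases j) (auto simp: algebra_simps)
  then have "int (2 * triangular j + (2 * M - 1) * (2 * M - j))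
      = int j * (int j - 1) + (2 * int M - 1) * (2 * int M - int j)"
    using assms by (simp add: of_nat_diff)
  also have "\<dots> = (int j - int M) ^ 2 + (int M * (int M - 1) + (2 * int M - 1) * int M)"
    by (simp add: algebra_simps power2_eq_square)
  also have "\<dots> = int (centre_dist M j ^ 2 + exponent_shift M)"
    using assms by (simp add: int_centre_dist_square exponent_shift_def of_nat_diff)
  finally show ?thesis by linarith
qed

lemma lower_half_product:
  "(\<Prod>i<M. q ^ (2 * M - 1) - (q ^ 2) ^ i) = (-1) ^ M * q ^ (M * (M - 1)) * odd_qpoch (q::'a::comm_ring_1) M"
proof -
  have "(\<Prod>i<M. q ^ (2 * M - 1) - (q ^ 2) ^ i) = (\<Prod>i<M. (-1) * q ^ (2 * i) * (1 - q ^ (2 * (M - Suc i) + 1)))"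
  proof (rule prod.cong[OF refl])
    fix i assume "i \<in> {..<M}"
    then have "2 * M - 1 = 2 * i + (2 * (M - Suc i) + 1)" by auto
    then have "q ^ (2 * M - 1) = q ^ (2 * i) * q ^ (2 * (M - Suc i) + 1)" by (simp add: power_add)
    then show "q ^ (2 * M - 1) - (q ^ 2) ^ i = (-1) * q ^ (2 * i) * (1 - q ^ (2 * (M - Suc i) + 1))"
      by (simp add: algebra_simps flip: power_mult)
  qed
  also have "\<dots> = (\<Prod>i<M. -1) * (\<Prod>i<M. q ^ (2 * i)) * (\<Prod>i<M. 1 - q ^ (2 * (M - Suc i) + 1))"
    by (simp only: prod.distrib)
  also have "(\<Prod>i<M. 1 - q ^ (2 * (M - Suc i) + 1)) = odd_qpoch q M"
    unfolding odd_qpoch_def by (rule prod.nat_diff_reindex)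
  finally show ?thesis by (simp add: prod_even_powers)
qed

lemma upper_half_product:
  assumes "1 \<le> M"
  shows "(\<Prod>i<M. q ^ (2 * M - 1) - (q ^ 2) ^ (M + i)) = q ^ ((2 * M - 1) * M) * odd_qpoch (q::'a::comm_ring_1) M"
proof -
  have "(\<Prod>i<M. q ^ (2 * M - 1) - (q ^ 2) ^ (M + i)) = (\<Prod>i<M. q ^ (2 * M - 1) * (1 - q ^ (2 * i + 1)))"
  proof (rule prod.cong[OF refl])
    fix i
    have "2 * (M + i) = (2 * M - 1) + (2 * i + 1)" using assms by auto
    have "(q ^ 2) ^ (M + i) = q ^ (2 * (M + i))"
      by (rule power_mult[symmetric])
    also have "\<dots> = q ^ ((2 * M - 1) + (2 * i + 1))"
      by (simp only: \<open>2 * (M + i) = (2 * M - 1) + (2 * i + 1)\<close>)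
    also have "\<dots> = q ^ (2 * M - 1) * q ^ (2 * i + 1)"
      by (rule power_add)
    finally have "(q ^ 2) ^ (M + i) = q ^ (2 * M - 1) * q ^ (2 * i + 1)" .
    then show "q ^ (2 * M - 1) - (q ^ 2) ^ (M + i) = q ^ (2 * M - 1) * (1 - q ^ (2 * i + 1))"
      by (simp add: algebra_simps)
  qed
  then show ?thesis
    by (simp add: prod.distrib odd_qpoch_def power_mult)
qed

lemma odd_qpoch_square_expansion:
  assumes M: "1 \<le> M"
  shows "(-1) ^ M * q ^ exponent_shift M * odd_qpoch q M ^ 2
    = (\<Sum>j\<le>2 * M. (-1) ^ j * q ^ (centre_dist M j ^ 2 + exponent_shift M) * gauss_binomial (q ^ 2) (2 * M) j)"
proof -
  have "(-1) ^ M * q ^ exponent_shift M * odd_qpoch q M ^ 2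
      = (\<Prod>i<M. q ^ (2 * M - 1) - (q ^ 2) ^ i) * (\<Prod>i<M. q ^ (2 * M - 1) - (q ^ 2) ^ (M + i))"
    unfolding lower_half_product upper_half_product[OF M]
    by (simp add: exponent_shift_def power_add power2_eq_square mult_ac)
  also have "\<dots> = (\<Prod>i<2 * M. q ^ (2 * M - 1) + (-1) * (q ^ 2) ^ i)"
    using prod_lessThan_add[of "\<lambda>i. q ^ (2 * M - 1) + (-1) * (q ^ 2) ^ i" M M] by (simp add: mult_2)
  also have "\<dots> = (\<Sum>j\<le>2 * M. (q ^ 2) ^ triangular j * gauss_binomial (q ^ 2) (2 * M) j * (-1) ^ j
      * (q ^ (2 * M - 1)) ^ (2 * M - j))"
    by (rule cauchy_binomial)
  also have "\<dots> = (\<Sum>j\<le>2 * M. (-1) ^ j * q ^ (centre_dist M j ^ 2 + exponent_shift M)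
      * gauss_binomial (q ^ 2) (2 * M) j)"
  proof (rule sum.cong[OF refl])
    fix j assume "j \<in> {..2 * M}"
    then have exponent: "(q ^ 2) ^ triangular j * (q ^ (2 * M - 1)) ^ (2 * M - j)
        = q ^ (centre_dist M j ^ 2 + exponent_shift M)"
      using exponent_identity[OF _ M] by (simp flip: power_mult power_add)
    have "(q ^ 2) ^ triangular j * gauss_binomial (q ^ 2) (2 * M) j * (-1) ^ j * (q ^ (2 * M - 1)) ^ (2 * M - j)
        = (-1) ^ j * ((q ^ 2) ^ triangular j * (q ^ (2 * M - 1)) ^ (2 * M - j)) * gauss_binomial (q ^ 2) (2 * M) j"
      by (simp only: mult_ac)
    then show "(q ^ 2) ^ triangular j * gauss_binomial (q ^ 2) (2 * M) j * (-1) ^ j * (q ^ (2 * M - 1)) ^ (2 * M - j)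
        = (-1) ^ j * q ^ (centre_dist M j ^ 2 + exponent_shift M) * gauss_binomial (q ^ 2) (2 * M) j"
      by (simp only: exponent)
  qed
  finally show ?thesis .
qed

subsection \<open>Gauss's identity \<open>\<theta>(-q) \<cdot> \<Prod>\<^sub>k (1 + q^k)/(1 - q^k) = 1\<close>\<close>

lemma qpoch_nth_0: "fps_nth A 0 = 0 \<Longrightarrow> fps_nth (qpoch A L) 0 = 1"
  by (induct L) (simp_all add: qpoch_def fps_nth_power_0)

text \<open>\<open>(q\<^sup>k; q\<^sup>k)\<^sub>L\<close> and \<open>(q\<^sup>k; q\<^sup>k)\<^sub>K\<close> agree below degree \<open>k(L + 1)\<close>, as all extra factors are \<open>1\<close> there.\<close>

lemma qpoch_X_power_stable:
  assumes "L \<le> K"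
  shows "agree (k * Suc L) (qpoch (fps_X ^ k) L :: 'a::comm_ring_1 fps) (qpoch (fps_X ^ k) K)"
proof -
  have split: "qpoch (fps_X ^ k) K = qpoch (fps_X ^ k) L * (\<Prod>i<K - L. 1 - (fps_X ^ k) ^ Suc (L + i) :: 'a fps)"
    using prod_lessThan_add[of "\<lambda>i. 1 - (fps_X ^ k) ^ Suc i :: 'a fps" L "K - L"] assms
    by (simp add: qpoch_def)
  have tail: "agree (k * Suc L) (\<Prod>i<K - L. 1 - (fps_X ^ k) ^ Suc (L + i) :: 'a fps) (\<Prod>i<K - L. 1)"
  proof (rule agree_prod)
    fix i
    have "agree (k * Suc L) (1 + (-1) * fps_X ^ (k * Suc (L + i))) (1 :: 'a fps)"
      by (rule agree_one_plus_X_power) simp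
    moreover have "(fps_X ^ k) ^ Suc (L + i) = (fps_X ^ (k * Suc (L + i)) :: 'a fps)"
      by (rule power_mult[symmetric])
    ultimately show "agree (k * Suc L) (1 - (fps_X ^ k) ^ Suc (L + i)) (1 :: 'a fps)"
      by simp
  qed
  have "agree (k * Suc L) (qpoch (fps_X ^ k) L * (\<Prod>i<K - L. 1 - (fps_X ^ k) ^ Suc (L + i)))
      (qpoch (fps_X ^ k) L * (\<Prod>i<K - L. 1 :: 'a fps))"
    by (rule agree_mult[OF agree_refl tail])
  then have "agree (k * Suc L) (qpoch (fps_X ^ k) K) (qpoch (fps_X ^ k) L :: 'a fps)"
    unfolding split[symmetric] by simp
  then show ?thesis
    by (rule agree_sym)
qed

lemma qpoch_double:
  "qpoch fps_X (2 * L) = odd_qpoch fps_X L * (qpoch (fps_X ^ 2) L :: 'a::comm_ring_1 fps)"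
proof (induct L)
  case (Suc L)
  have "qpoch fps_X (2 * Suc L) = (qpoch fps_X (2 * L) :: 'a fps) * (1 - fps_X ^ (2 * L + 1)) * (1 - fps_X ^ (2 * L + 2))"
    by (simp add: qpoch_Suc mult.assoc)
  also have "\<dots> = (odd_qpoch fps_X L * (1 - fps_X ^ (2 * L + 1))) * (qpoch (fps_X ^ 2) L * (1 - (fps_X ^ 2) ^ Suc L))"
  proof -
    have "(fps_X ^ 2) ^ Suc L = (fps_X ^ (2 * Suc L) :: 'a fps)"
      by (rule power_mult[symmetric])
    then have b: "(fps_X ^ 2) ^ Suc L = (fps_X ^ (2 * L + 2) :: 'a fps)"
      by simp
    show ?thesis
      unfolding b Suc by (simp only: mult_ac)
  qed
  finally show ?case
    by (simp add: odd_qpoch_def qpoch_Suc)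
qed (simp add: qpoch_def odd_qpoch_def)

definition plus_product :: "nat \<Rightarrow> 'a::comm_ring_1 fps" where
  "plus_product L = (\<Prod>i<L. 1 + fps_X ^ Suc i)"

lemma plus_product_qpoch: "plus_product L * qpoch fps_X L = (qpoch (fps_X ^ 2) L :: 'a::comm_ring_1 fps)"
proof -
  have "(1 + fps_X ^ Suc i) * (1 - fps_X ^ Suc i) = (1 - (fps_X ^ 2) ^ Suc i :: 'a fps)" for i
    by (simp add: algebra_simps power2_eq_square flip: power_mult_distrib)
  then show ?thesis
    by (simp add: plus_product_def qpoch_def flip: prod.distrib)
qed

lemma overpartition_product_qpoch:
  "overpartition_product N * qpoch fps_X N = (plus_product N :: 'a::comm_ring_1 fps)"
proof -
  have "overpartition_product N * qpoch fps_X N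
      = (\<Prod>i<N. overpartition_factor (Suc i) * (1 - fps_X ^ Suc i) :: 'a fps)"
    by (simp only: overpartition_product_def qpoch_def prod.distrib)
  also have "\<dots> = plus_product N"
    unfolding plus_product_def
    by (rule prod.cong[OF refl], rule overpartition_factor_one_minus_X_power) simp
  finally show ?thesis .
qed

text \<open>Multiplying \<open>[2M, j]\<^sub>q\<^sub>\<^sup>2\<close> by \<open>(q\<^sup>2; q\<^sup>2)\<^sub>2\<^sub>M\<close> gives \<open>(q\<^sup>2; q\<^sup>2)\<^sub>2\<^sub>M\<^sup>2 / ((q\<^sup>2; q\<^sup>2)\<^sub>j (q\<^sup>2; q\<^sup>2)\<^sub>2\<^sub>M\<^sub>-\<^sub>j)\<close>, which is
  \<open>1\<close> up to degree \<open>2 min(j, 2M - j) + 1\<close>.\<close>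

lemma gauss_binomial_truncation:
  assumes j: "j \<le> 2 * M"
  shows "agree (2 * min j (2 * M - j) + 2)
    (gauss_binomial (fps_X ^ 2) (2 * M) j * qpoch (fps_X ^ 2) (2 * M)) (1 :: 'a::comm_ring_1 fps)"
proof -
  define m where "m = 2 * min j (2 * M - j) + 2"
  define P where "P n = (qpoch (fps_X ^ 2) n :: 'a fps)" for n
  have P0: "fps_nth (P n) 0 = 1" for n
    by (simp add: P_def qpoch_nth_0)
  have "agree m (P j) (P (2 * M))" "agree m (P (2 * M - j)) (P (2 * M))"
    using qpoch_X_power_stable[of j "2 * M" 2] qpoch_X_power_stable[of "2 * M - j" "2 * M" 2] j
    by (auto simp: m_def P_def intro: agree_mono)
  then have "agree m (gauss_binomial (fps_X ^ 2) (2 * M) j * P j * P (2 * M - j))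
      (gauss_binomial (fps_X ^ 2) (2 * M) j * P (2 * M) * P (2 * M))"
    by (intro agree_mult agree_refl)
  then have "agree m ((gauss_binomial (fps_X ^ 2) (2 * M) j * P (2 * M)) * P (2 * M)) (1 * P (2 * M))"
    unfolding P_def gauss_binomial_qpoch[OF j] by (simp add: agree_sym)
  then show ?thesis
    unfolding m_def[symmetric] P_def[symmetric] using P0 by (rule agree_cancel)
qed

lemma fps_X_power_mult_cancel:
  "fps_X ^ k * A = (fps_X ^ k * B :: 'a::comm_ring_1 fps) \<Longrightarrow> A = B"
  by (metis add_diff_cancel_right' fps_ext fps_X_power_mult_nth not_add_less2)

lemma odd_qpoch_square:
  assumes M: "1 \<le> M"
  shows "odd_qpoch fps_X M ^ 2 = (\<Sum>j\<le>2 * M. (-1) ^ (j + M) * fps_X ^ (centre_dist M j ^ 2)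
    * gauss_binomial (fps_X ^ 2) (2 * M) j :: 'a::comm_ring_1 fps)"
proof -
  have sign: "(-1 :: 'a fps) ^ M * (-1) ^ M = 1"
    by (simp flip: power_add)
  have "fps_X ^ exponent_shift M * odd_qpoch fps_X M ^ 2
      = (-1) ^ M * ((-1) ^ M * fps_X ^ exponent_shift M * (odd_qpoch fps_X M ^ 2 :: 'a fps))"
    by (simp add: mult.assoc[symmetric] sign)
  also have "\<dots> = (\<Sum>j\<le>2 * M. (-1) ^ M * ((-1) ^ j * fps_X ^ (centre_dist M j ^ 2 + exponent_shift M)
      * gauss_binomial (fps_X ^ 2) (2 * M) j))"
    unfolding odd_qpoch_square_expansion[OF M] by (rule sum_distrib_left)
  also have "\<dots> = fps_X ^ exponent_shift M * (\<Sum>j\<le>2 * M. (-1) ^ (j + M) * fps_X ^ (centre_dist M j ^ 2)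
      * gauss_binomial (fps_X ^ 2) (2 * M) j)"
    unfolding sum_distrib_left by (rule sum.cong) (simp_all add: power_add mult_ac)
  finally show ?thesis
    by (rule fps_X_power_mult_cancel)
qed

definition theta_trunc :: "nat \<Rightarrow> 'a::comm_ring_1 fps" where
  "theta_trunc M = (\<Sum>j\<le>2 * M. (-1) ^ (j + M) * fps_X ^ (centre_dist M j ^ 2))"

lemma odd_qpoch_square_agree:
  assumes M: "1 \<le> M"
  shows "agree (2 * M + 1) (odd_qpoch fps_X M ^ 2 * qpoch (fps_X ^ 2) (2 * M)) (theta_trunc M :: 'a::comm_ring_1 fps)"
proof -
  have "odd_qpoch fps_X M ^ 2 * qpoch (fps_X ^ 2) (2 * M) = (\<Sum>j\<le>2 * M. (-1) ^ (j + M)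
      * (fps_X ^ (centre_dist M j ^ 2) * (gauss_binomial (fps_X ^ 2) (2 * M) j * qpoch (fps_X ^ 2) (2 * M) :: 'a fps)))"
    unfolding odd_qpoch_square[OF M] sum_distrib_right by (simp add: mult_ac)
  moreover have "agree (2 * M + 1)
      (\<Sum>j\<le>2 * M. (-1) ^ (j + M) * (fps_X ^ (centre_dist M j ^ 2) * (gauss_binomial (fps_X ^ 2) (2 * M) j * qpoch (fps_X ^ 2) (2 * M))))
      (\<Sum>j\<le>2 * M. (-1) ^ (j + M) * (fps_X ^ (centre_dist M j ^ 2) * (1 :: 'a fps)))"
  proof (rule agree_sum, rule agree_mult[OF agree_refl])
    fix j assume "j \<in> {..2 * M}"
    then have j: "j \<le> 2 * M" by simp
    have "2 * centre_dist M j \<le> centre_dist M j ^ 2 + 1"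
      by (cases "centre_dist M j") (auto simp: power2_eq_square)
    then have "2 * M + 1 \<le> centre_dist M j ^ 2 + (2 * min j (2 * M - j) + 2)"
      using j by (auto simp: centre_dist_def)
    then show "agree (2 * M + 1) (fps_X ^ (centre_dist M j ^ 2) * (gauss_binomial (fps_X ^ 2) (2 * M) j
        * qpoch (fps_X ^ 2) (2 * M))) (fps_X ^ (centre_dist M j ^ 2) * (1 :: 'a fps))"
      using agree_shift[OF gauss_binomial_truncation[OF j]] by (rule agree_mono[rotated])
  qed
  ultimately show ?thesis by (simp add: theta_trunc_def)
qed

text \<open>The truncated sum is the truncation of \<open>\<theta>(-q)\<close>: the terms \<open>j\<close> with \<open>(j - M)\<^sup>2 = n\<close>
  correspond to the integer square roots of \<open>n\<close>, and \<open>j + M \<equiv> (j - M)\<^sup>2\<close> modulo \<open>2\<close>.\<close>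

lemma card_centre_dist:
  assumes "n \<le> 2 * M"
  shows "card {j. j \<le> 2 * M \<and> centre_dist M j ^ 2 = n} = card {k :: int. k ^ 2 = int n}"
proof (rule bij_betw_same_card[of "\<lambda>j. int j - int M"])
  have bound: "- int M \<le> k \<and> k \<le> int M" if "k ^ 2 = int n" for k :: int
  proof (rule ccontr)
    assume "\<not> (- int M \<le> k \<and> k \<le> int M)"
    then have "int M + 1 \<le> \<bar>k\<bar>" by auto
    then have "(int M + 1) * (int M + 1) \<le> \<bar>k\<bar> * \<bar>k\<bar>" by (intro mult_mono) auto
    then have "int M * int M + 2 * int M + 1 \<le> int n"
      using that by (simp add: power2_eq_square algebra_simps)
    moreover have "0 \<le> int M * int M" "int n \<le> 2 * int M"
      using assms by simp_all
    ultimately show False by linarith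
  qed
  have dist: "centre_dist M j ^ 2 = n \<longleftrightarrow> (int j - int M) ^ 2 = int n" for j
    by (metis int_centre_dist_square of_nat_eq_iff of_nat_power)
  show "bij_betw (\<lambda>j. int j - int M) {j. j \<le> 2 * M \<and> centre_dist M j ^ 2 = n} {k. k ^ 2 = int n}"
  proof (rule bij_betw_byWitness[where f' = "\<lambda>k. nat (k + int M)"])
    show "\<forall>k\<in>{k. k ^ 2 = int n}. int (nat (k + int M)) - int M = k"
      using bound by force
    show "(\<lambda>k. nat (k + int M)) ` {k. k ^ 2 = int n} \<subseteq> {j. j \<le> 2 * M \<and> centre_dist M j ^ 2 = n}"
    proof clarify
      fix k :: int assume k: "k ^ 2 = int n"
      then have "int (nat (k + int M)) = k + int M"
        using bound[OF k] by simp
      then show "nat (k + int M) \<le> 2 * M \<and> centre_dist M (nat (k + int M)) ^ 2 = n"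
        using bound[OF k] k by (simp add: dist nat_le_iff)
    qed
  qed (auto simp: dist)
qed

lemma fps_neg_one_power_mult_nth:
  "fps_nth ((-1 :: 'a::comm_ring_1 fps) ^ k * A) n = (-1) ^ k * fps_nth A n"
proof -
  have "(-1 :: 'a fps) = fps_const (-1)"
    by (simp only: fps_const_neg[symmetric] fps_const_1_eq_1)
  then have "(-1 :: 'a fps) ^ k = fps_const ((-1) ^ k)"
    by (simp only: fps_const_power)
  then show ?thesis by simp
qed

lemma sign_twist_theta_nth: "fps_nth (sign_twist theta) n = (-1) ^ n * of_nat (card {k :: int. k ^ 2 = int n})"
  by (simp add: sign_twist_def theta_nth)

lemma sign_twist_theta_agree: "agree (2 * M + 1) (sign_twist theta) (theta_trunc M :: 'a::comm_ring_1 fps)"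
  unfolding agree_def
proof (intro allI impI)
  fix n assume n: "n < 2 * M + 1"
  have parity: "(-1 :: 'a) ^ (j + M) = (-1) ^ (centre_dist M j ^ 2)" for j
    by (auto simp: centre_dist_def minus_one_power_iff)
  have "fps_nth (theta_trunc M :: 'a fps) n = (\<Sum>j\<le>2 * M. (-1) ^ (j + M) * (if n = centre_dist M j ^ 2 then 1 else 0))"
    by (simp add: theta_trunc_def fps_sum_nth fps_neg_one_power_mult_nth)
  also have "\<dots> = (\<Sum>j\<in>{j. j \<le> 2 * M \<and> centre_dist M j ^ 2 = n}. (-1 :: 'a) ^ n)"
    by (rule sum.mono_neutral_cong_right) (auto simp: parity)
  also have "\<dots> = fps_nth (sign_twist theta) n"
    using card_centre_dist[of n M] n by (simp add: sign_twist_theta_nth)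
  finally show "fps_nth (sign_twist theta) n = fps_nth (theta_trunc M :: 'a fps) n" ..
qed

text \<open>Truncated form of Gauss's identity: \<open>\<theta>(-q) \<Prod>\<^sub>k\<^sub>\<le>\<^sub>N (1 + q^k) \<equiv> (q; q)\<^sub>N\<close> below degree
  \<open>N + 1\<close>, using \<open>(q; q)\<^sub>2\<^sub>N = (q; q\<^sup>2)\<^sub>N (q\<^sup>2; q\<^sup>2)\<^sub>N\<close> and \<open>\<Prod>(1 + q^k) (q; q)\<^sub>N = (q\<^sup>2; q\<^sup>2)\<^sub>N\<close>.\<close>

lemma gauss_identity_truncated:
  assumes N: "1 \<le> N"
  shows "agree (N + 1) (sign_twist theta * plus_product N) (qpoch fps_X N :: 'a::comm_ring_1 fps)"
proof -
  let ?Q1 = "\<lambda>n. qpoch fps_X n :: 'a fps" and ?Q2 = "\<lambda>n. qpoch (fps_X ^ 2) n :: 'a fps"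
  have Q1: "agree (N + 1) (?Q1 (2 * N)) (?Q1 N)"
    using agree_sym[OF qpoch_X_power_stable[of N "2 * N" 1]] by simp
  have "agree (2 * Suc N) (?Q2 N) (?Q2 (2 * N))"
    by (rule qpoch_X_power_stable) simp
  then have "agree (N + 1) (?Q2 N) (?Q2 (2 * N))"
    by (rule agree_mono) simp
  then have Q2: "agree (N + 1) (?Q2 (2 * N)) (?Q2 N)"
    by (rule agree_sym)
  have "agree (N + 1) (sign_twist theta) (odd_qpoch fps_X N ^ 2 * ?Q2 (2 * N))"
    using agree_trans[OF sign_twist_theta_agree odd_qpoch_square_agree[OF N, THEN agree_sym]]
    by (rule agree_mono) simp
  then have "agree (N + 1) (sign_twist theta) (odd_qpoch fps_X N ^ 2 * ?Q2 N)"
    using agree_mult[OF agree_refl Q2] agree_trans by blast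
  moreover have "odd_qpoch fps_X N ^ 2 * ?Q2 N = odd_qpoch fps_X N * ?Q1 (2 * N)"
    unfolding qpoch_double by (simp only: power2_eq_square[of "odd_qpoch fps_X N"] mult.assoc)
  ultimately have "agree (N + 1) (sign_twist theta) (odd_qpoch fps_X N * ?Q1 (2 * N))"
    by simp
  then have "agree (N + 1) (sign_twist theta * plus_product N) (odd_qpoch fps_X N * ?Q1 (2 * N) * plus_product N)"
    by (rule agree_mult[OF _ agree_refl])
  moreover have "agree (N + 1) (odd_qpoch fps_X N * ?Q1 (2 * N) * plus_product N) (odd_qpoch fps_X N * ?Q1 N * plus_product N)"
    by (intro agree_mult Q1 agree_refl)
  moreover have "odd_qpoch fps_X N * ?Q1 N * plus_product N = ?Q1 (2 * N)"
  proof -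
    have "odd_qpoch fps_X N * ?Q1 N * plus_product N = odd_qpoch fps_X N * (plus_product N * ?Q1 N)"
      by (simp only: mult_ac)
    also have "\<dots> = ?Q1 (2 * N)"
      by (simp only: plus_product_qpoch qpoch_double)
    finally show ?thesis .
  qed
  ultimately show ?thesis
    using Q1 by (metis agree_trans)
qed

text \<open>Gauss's identity \<open>\<theta>(-q) P(q) = 1\<close> for the overpartition generating function \<open>P\<close>, over any commutative ring: cancel \<open>(q; q)\<^sub>N\<close> from the truncated identity.\<close>

theorem gauss_identity: "sign_twist theta * (overpartition_gf :: 'a::comm_ring_1 fps) = 1"
proof (rule agree_all)
  fix m
  have "agree (m + 2) (sign_twist theta * overpartition_product (m + 1) * qpoch fps_X (m + 1)) (1 * (qpoch fps_X (m + 1) :: 'a fps))"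
    using gauss_identity_truncated[of "m + 1"] by (simp add: mult.assoc overpartition_product_qpoch)
  then have "agree (m + 2) (sign_twist theta * overpartition_product (m + 1)) (1 :: 'a fps)"
    by (rule agree_cancel) (simp add: qpoch_nth_0)
  moreover have "agree (m + 2) (sign_twist theta * overpartition_gf) (sign_twist theta * (overpartition_product (m + 1) :: 'a fps))"
    using overpartition_gf_agree[of "m + 1"] by (intro agree_mult agree_refl) simp
  ultimately show "agree m (sign_twist theta * overpartition_gf) (1 :: 'a fps)"
    by (meson agree_mono agree_trans le_add1)
qed

subsection \<open>The 5-dissection of the overpartition generating function\<close>

text \<open>Write \<open>F = \<theta>(-q)\<close> and \<open>P = \<Sum> pbar(n) q^n\<close> over \<open>\<int>/5\<int>\<close>, so \<open>F P = 1\<close>.  Then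
  \<open>P \<cdot> F(q\<^sup>5) = P F\<^sup>5 = F\<^sup>4\<close>, and since the degree-\<open>0 (mod 5)\<close> part of \<open>F\<^sup>4\<close> is \<open>F\<^sup>4(q\<^sup>5)\<close>,
  extracting the degrees divisible by \<open>5\<close> gives \<open>(\<Sum> pbar(5n) q^n) F = F\<^sup>4\<close>, i.e.
  \<open>\<Sum> pbar(5n) q^n = F\<^sup>3 = \<theta>(-q)\<^sup>3\<close> over \<open>\<int>/5\<int>\<close>.\<close>

lemma decimate_overpartition_gf: "decimate 5 (overpartition_gf :: 5 fps) = sign_twist (theta ^ 3)"
proof -
  define F :: "5 fps" where "F = sign_twist theta"
  define P :: "5 fps" where "P = overpartition_gf"
  have FP: "F * P = 1"
    unfolding F_def P_def by (rule gauss_identity)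
  have F4: "decimate 5 (F ^ 4) = F ^ 4"
    by (simp add: F_def decimate_sign_twist decimate_theta_fourth flip: sign_twist_power)
  have "P * dilate 5 F = P * F ^ 5"
    by (simp only: frobenius)
  also have "\<dots> = (F * P) * F ^ 4"
    by (simp add: eval_nat_numeral mult_ac)
  finally have quotient: "decimate 5 P * F = F ^ 4"
    using F4 by (simp add: FP decimate_mult_dilate[symmetric])
  have "decimate 5 P = (decimate 5 P * F) * P"
    by (simp add: FP mult.assoc)
  also have "\<dots> = F ^ 3 * (F * P)"
    by (simp only: quotient) (simp add: eval_nat_numeral mult_ac)
  finally have "decimate 5 P = F ^ 3"
    by (simp add: FP)
  then show ?thesis
    by (simp add: F_def P_def sign_twist_power)
qed

lemma overpartition_count_five_mult:
  "(of_nat (overpartition_count (5 * n)) :: 5) = (-1) ^ n * of_nat (card (three_squares (int n)))"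
proof -
  have "(of_nat (overpartition_count (5 * n)) :: 5) = fps_nth (decimate 5 overpartition_gf) n"
    by (simp add: decimate_def overpartition_gf_def)
  also have "\<dots> = (-1) ^ n * of_nat (card (three_squares (int n)))"
    by (simp add: decimate_overpartition_gf sign_twist_def theta_cube_nth)
  finally show ?thesis .
qed

text \<open>The theorem: by the last lemma and \<open>r\<^sub>3(4n) = r\<^sub>3(n)\<close>, both sides are \<open>\<equiv> (-1)^n r\<^sub>3(n)\<close>.\<close>

theorem theorem1p1:
  fixes n :: nat
  shows "[int (overpartition_count (5 * n)) = (-1) ^ n * int (overpartition_count (20 * n))] (mod 5)"
proof -
  have "(of_nat (overpartition_count (20 * n)) :: 5) = of_nat (card (three_squares (int n)))"
    using overpartition_count_five_mult[of "4 * n"] three_squares_four_mult[of "int n"]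
    by (simp add: power_mult)
  then have "(of_int (int (overpartition_count (5 * n))) :: 5)
      = of_int ((-1) ^ n * int (overpartition_count (20 * n)))"
    by (simp add: overpartition_count_five_mult)
  then have "[int (overpartition_count (5 * n)) = (-1) ^ n * int (overpartition_count (20 * n))] (mod int CHAR(5))"
    by (rule of_int_eq_iff_cong_CHAR[THEN iffD1])
  then show ?thesis
    by simp
qed

end
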